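(* For every $f_0>1$, $$\beta(f_0)\le\frac{\pi}{2^{1/2}}+(f_0-1)^{1/2},\qquad\text{where }\ \beta(f_0)=\frac12\int_{\phi_*(f_0)}^{\phi^*(f_0)}\frac{d\phi}{\sqrt{f_0-f(\phi)}}.$$
   Context: Let $f(\phi)=e^\phi-\phi$. For $f_1\ge1$, $\phi_*(f_1)\le0\le\phi^*(f_1)$ denote the two solutions $\phi$ of $f(\phi)=f_1$. *)

theory Defs
  imports "HOL-Analysis.Analysis"
begin

definition ff :: "real \<Rightarrow> real" where
  "ff \<phi> = exp \<phi> - \<phi>"

definition phi_lo :: "real \<Rightarrow> real" where
  "phi_lo f1 = (THE \<phi>. \<phi> \<le> 0 \<and> ff \<phi> = f1)"

definition phi_hi :: "real \<Rightarrow> real" where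
  "phi_hi f1 = (THE \<phi>. 0 \<le> \<phi> \<and> ff \<phi> = f1)"

text \<open>beta(f0) = 1/2 * integral over (phi_lo f0, phi_hi f0) of 1/sqrt(f0 - ff phi),
  as a (possibly improper) nonnegative Lebesgue integral, valued in ennreal.\<close>
definition beta :: "real \<Rightarrow> ennreal" where
  "beta f0 = ennreal (1/2) *
     (\<integral>\<^sup>+ \<phi> \<in> {phi_lo f0 <..< phi_hi f0}. ennreal (1 / sqrt (f0 - ff \<phi>)) \<partial>lborel)"

end

theory Submission
  imports Defs
begin

text \<open>Put \<open>g(\<phi>) = e\<^sup>\<phi> - 1 - \<phi>\<close> and \<open>c = f\<^sub>0 - 1\<close>, so that the integrand is \<open>1/\<surd>(c - g)\<close>.
  For \<open>\<phi> \<ge> 0\<close> one has \<open>\<surd>(2g) \<le> g'\<close>, so the integrand is dominated by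
  \<open>\<surd>2 g'/(2\<surd>g \<surd>(c - g))\<close>, the derivative of \<open>\<surd>2 arcsin \<surd>(g/c)\<close>; this half contributes
  \<open>\<pi>/\<surd>2\<close>. For \<open>\<phi> \<le> 0\<close> split \<open>1 = e\<^sup>\<phi> + (1 - e\<^sup>\<phi>)\<close>: the estimate \<open>\<surd>(2g) e\<^sup>\<phi> \<le> -g'\<close>
  treats the first part in the same way, and the second part is the derivative of
  \<open>2\<surd>(c - g)\<close>, contributing \<open>\<pi>/\<surd>2 + 2\<surd>c\<close> in total.\<close>

definition exp_gap :: "real \<Rightarrow> real" where
  "exp_gap x = exp x - 1 - x"

lemma ff_eq_exp_gap: "ff x = 1 + exp_gap x"
  by (simp add: ff_def exp_gap_def)

lemma exp_gap_0 [simp]: "exp_gap 0 = 0"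
  by (simp add: exp_gap_def)

lemma exp_gap_nonneg: "0 \<le> exp_gap x"
  unfolding exp_gap_def using exp_ge_add_one_self[of x] by linarith

lemma DERIV_exp_gap: "(exp_gap has_real_derivative exp x - 1) (at x)"
  unfolding exp_gap_def by (auto intro!: derivative_eq_intros)

lemma continuous_on_exp_gap [continuous_intros]: "continuous_on S exp_gap"
  unfolding exp_gap_def by (intro continuous_intros)

lemma isCont_exp_gap [continuous_intros]: "isCont exp_gap x"
  unfolding exp_gap_def by (intro continuous_intros)

lemma borel_measurable_exp_gap [measurable]: "exp_gap \<in> borel_measurable borel"
  by (intro borel_measurable_continuous_onI continuous_on_exp_gap)

lemma exp_gap_strict_mono:
  assumes "0 \<le> x" "x < y"
  shows "exp_gap x < exp_gap y"
proof (rule DERIV_pos_imp_increasing_open[OF \<open>x < y\<close> _ continuous_on_exp_gap])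
  fix t assume "x < t"
  then show "\<exists>d. DERIV exp_gap t :> d \<and> d > 0"
    using assms DERIV_exp_gap[of t] by (intro exI[of _ "exp t - 1"]) auto
qed

lemma exp_gap_strict_antimono:
  assumes "x < y" "y \<le> 0"
  shows "exp_gap y < exp_gap x"
proof (rule DERIV_neg_imp_decreasing_open[OF \<open>x < y\<close> _ continuous_on_exp_gap])
  fix t assume "t < y"
  then show "\<exists>d. DERIV exp_gap t :> d \<and> d < 0"
    using assms DERIV_exp_gap[of t] by (intro exI[of _ "exp t - 1"]) auto
qed

lemma exp_gap_attains_pos:
  assumes "0 < c"
  obtains b where "0 < b" "exp_gap b = c"
proof -
  have "2 * (1 + c) \<le> exp 1 * exp c"
    using exp_ge_add_one_self[of 1] exp_ge_add_one_self[of c] assms by (intro mult_mono) auto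
  then have "c \<le> exp_gap (1 + c)"
    by (simp add: exp_gap_def exp_add)
  then obtain b where "0 \<le> b" "exp_gap b = c"
    using IVT'[of exp_gap 0 c "1 + c"] assms continuous_on_exp_gap by auto
  moreover from this assms have "b \<noteq> 0"
    by auto
  ultimately show thesis
    by (intro that) auto
qed

lemma exp_gap_attains_neg:
  assumes "0 < c"
  obtains a where "a < 0" "exp_gap a = c"
proof -
  have "c \<le> exp_gap (- 1 - c)"
    using exp_gt_zero[of "- 1 - c"] by (simp add: exp_gap_def)
  then obtain a where "a \<le> 0" "exp_gap a = c"
    using IVT2'[of exp_gap 0 c "- 1 - c"] assms continuous_on_exp_gap by auto
  moreover from this assms have "a \<noteq> 0"
    by auto
  ultimately show thesis
    by (intro that) auto
qed

lemma phi_hi_eq: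
  assumes "0 < b" "exp_gap b = f1 - 1"
  shows "phi_hi f1 = b"
  unfolding phi_hi_def
proof (rule the_equality)
  show "0 \<le> b \<and> ff b = f1"
    using assms by (simp add: ff_eq_exp_gap)
next
  fix x assume "0 \<le> x \<and> ff x = f1"
  then show "x = b"
    using assms exp_gap_strict_mono[of x b] exp_gap_strict_mono[of b x]
    by (cases x b rule: linorder_cases) (auto simp: ff_eq_exp_gap)
qed

lemma phi_lo_eq:
  assumes "a < 0" "exp_gap a = f1 - 1"
  shows "phi_lo f1 = a"
  unfolding phi_lo_def
proof (rule the_equality)
  show "a \<le> 0 \<and> ff a = f1"
    using assms by (simp add: ff_eq_exp_gap)
next
  fix x assume "x \<le> 0 \<and> ff x = f1"
  then show "x = a"
    using assms exp_gap_strict_antimono[of x a] exp_gap_strict_antimono[of a x]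
    by (cases x a rule: linorder_cases) (auto simp: ff_eq_exp_gap)
qed

lemma sqrt_2_exp_gap_le:
  assumes "0 \<le> x"
  shows "sqrt (2 * exp_gap x) \<le> exp x - 1"
proof -
  let ?k = "\<lambda>t. (exp t - 1)\<^sup>2 - 2 * exp_gap t"
  have "(?k has_real_derivative 2 * (exp t - 1)\<^sup>2) (at t)" for t
    unfolding exp_gap_def
    by (auto intro!: derivative_eq_intros simp: power2_eq_square algebra_simps)
  moreover have "0 \<le> 2 * (exp t - 1 :: real)\<^sup>2" for t
    by simp
  ultimately have "?k 0 \<le> ?k x"
    by (intro DERIV_nonneg_imp_nondecreasing[OF assms]) blast
  then show ?thesis
    using assms by (intro real_le_lsqrt) auto
qed

lemma sqrt_2_exp_gap_mult_exp_le:
  assumes "x \<le> 0"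
  shows "sqrt (2 * exp_gap x) * exp x \<le> 1 - exp x"
proof -
  let ?m = "\<lambda>t. (1 - exp t)\<^sup>2 - 2 * exp_gap t * (exp t)\<^sup>2"
  have "(?m has_real_derivative
      - (2 * exp t * (1 - exp t)\<^sup>2 + 4 * exp_gap t * (exp t)\<^sup>2)) (at t)" for t
    unfolding exp_gap_def
    by (auto intro!: derivative_eq_intros simp: power2_eq_square algebra_simps)
  moreover have "- (2 * exp t * (1 - exp t)\<^sup>2 + 4 * exp_gap t * (exp t)\<^sup>2) \<le> 0" for t
    using exp_gap_nonneg[of t] by (intro neg_le_0_iff_le[THEN iffD2] add_nonneg_nonneg) auto
  ultimately have "?m 0 \<le> ?m x"
    by (intro DERIV_nonpos_imp_nonincreasing[OF assms]) blast
  then have "sqrt (2 * exp_gap x * (exp x)\<^sup>2) \<le> 1 - exp x"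
    using assms by (intro real_le_lsqrt) auto
  then show ?thesis
    by (simp add: real_sqrt_mult)
qed

lemma DERIV_arcsin_sqrt_divide:
  assumes g: "(g has_real_derivative g') (at x)" and "0 < g x" "g x < c"
  shows "((\<lambda>t. arcsin (sqrt (g t / c))) has_real_derivative
           g' / (2 * sqrt (g x) * sqrt (c - g x))) (at x)"
proof -
  have c: "0 < c"
    using assms by linarith
  have "0 < g x / c" "g x / c < 1"
    using assms by auto
  then have "((\<lambda>t. arcsin (sqrt (g t / c))) has_real_derivative
      inverse (sqrt (1 - (sqrt (g x / c))\<^sup>2)) * (inverse (sqrt (g x / c)) / 2 * (g' / c))) (at x)"
    by (intro DERIV_chain2[OF DERIV_arcsin] DERIV_chain2[OF DERIV_real_sqrt] DERIV_cdivide g)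
      (auto intro: order.strict_trans2[of _ 0])
  moreover have "1 - g x / c = (c - g x) / c"
    using c by (simp add: field_simps)
  ultimately show ?thesis
    using assms c by (simp add: real_sqrt_divide field_simps)
qed

lemma nn_integral_FTC_Ioo:
  fixes F f :: "real \<Rightarrow> real"
  assumes "a < b"
    and "\<And>x. a < x \<Longrightarrow> x < b \<Longrightarrow> (F has_real_derivative f x) (at x)"
    and "\<And>x. a < x \<Longrightarrow> x < b \<Longrightarrow> isCont f x"
    and nonneg: "\<And>x. a < x \<Longrightarrow> x < b \<Longrightarrow> 0 \<le> f x"
    and cont_F: "continuous_on {a..b} F"
  shows "(\<integral>\<^sup>+x\<in>{a<..<b}. ennreal (f x) \<partial>lborel) = ennreal (F b - F a)"
proof -
  have "(F \<longlongrightarrow> F a) (at_right a)" "(F \<longlongrightarrow> F b) (at_left b)"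
    using cont_F \<open>a < b\<close>
    by (auto intro: continuous_on_Icc_at_rightD continuous_on_Icc_at_leftD)
  then have "((F \<circ> real_of_ereal) \<longlongrightarrow> F a) (at_right (ereal a))"
    "((F \<circ> real_of_ereal) \<longlongrightarrow> F b) (at_left (ereal b))"
    unfolding at_right_ereal at_left_ereal filterlim_filtermap o_def by simp_all
  from interval_integral_FTC_nonneg[of a b F f, OF _ _ _ _ this] assms
  have integrable: "set_integrable lborel {a<..<b} f"
    and integral: "(LBINT x:{a<..<b}. f x) = F b - F a"
    by (auto intro!: AE_I2 simp: interval_lebesgue_integral_def)
  have "(\<integral>\<^sup>+x\<in>{a<..<b}. ennreal (f x) \<partial>lborel)
      = (\<integral>\<^sup>+x. ennreal (indicator {a<..<b} x *\<^sub>R f x) \<partial>lborel)"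
    by (intro nn_integral_cong) (auto simp: indicator_def)
  also have "\<dots> = ennreal (LBINT x:{a<..<b}. f x)"
    using integrable nonneg unfolding set_lebesgue_integral_def set_integrable_def
    by (intro nn_integral_eq_integral) (auto intro!: AE_I2 simp: indicator_def)
  finally show ?thesis
    using integral by simp
qed

lemma nn_integral_Ioo_split:
  fixes f :: "real \<Rightarrow> ennreal"
  assumes [measurable]: "f \<in> borel_measurable borel" and "a < m" "m < b"
  shows "(\<integral>\<^sup>+x\<in>{a<..<b}. f x \<partial>lborel)
           = (\<integral>\<^sup>+x\<in>{a<..<m}. f x \<partial>lborel) + (\<integral>\<^sup>+x\<in>{m<..<b}. f x \<partial>lborel)"
proof -
  have "(\<integral>\<^sup>+x\<in>{a<..<b}. f x \<partial>lborel) = (\<integral>\<^sup>+x\<in>{a<..<m} \<union> {m<..<b}. f x \<partial>lborel)"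
    using AE_lborel_singleton[of m] assms(2,3)
    by (intro nn_integral_cong_AE) (auto elim!: eventually_mono split: split_indicator)
  also have "\<dots> = (\<integral>\<^sup>+x\<in>{a<..<m}. f x \<partial>lborel) + (\<integral>\<^sup>+x\<in>{m<..<b}. f x \<partial>lborel)"
    by (rule nn_integral_disjoint_pair) auto
  finally show ?thesis .
qed

lemma inverse_sqrt_le_pos:
  assumes "0 < x" "exp_gap x < c"
  shows "1 / sqrt (c - exp_gap x)
           \<le> sqrt 2 * ((exp x - 1) / (2 * sqrt (exp_gap x) * sqrt (c - exp_gap x)))"
proof -
  have "2 * sqrt (exp_gap x) = sqrt 2 * sqrt (2 * exp_gap x)"
    by (simp add: real_sqrt_mult)
  also have "\<dots> \<le> sqrt 2 * (exp x - 1)"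
    using sqrt_2_exp_gap_le[of x] assms by (intro mult_left_mono) auto
  finally have "2 * sqrt (exp_gap x) \<le> sqrt 2 * (exp x - 1)" .
  moreover have "0 < sqrt (exp_gap x)" "0 < sqrt (c - exp_gap x)"
    using exp_gap_strict_mono[of 0 x] assms by auto
  ultimately show ?thesis
    by (simp add: divide_simps mult.assoc)
qed

lemma inverse_sqrt_le_neg:
  assumes "x < 0" "exp_gap x < c"
  shows "1 / sqrt (c - exp_gap x)
           \<le> sqrt 2 * ((1 - exp x) / (2 * sqrt (exp_gap x) * sqrt (c - exp_gap x)))
              + (1 - exp x) / sqrt (c - exp_gap x)"
proof -
  have "2 * sqrt (exp_gap x) * exp x = sqrt 2 * (sqrt (2 * exp_gap x) * exp x)"
    by (simp add: real_sqrt_mult)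
  also have "\<dots> \<le> sqrt 2 * (1 - exp x)"
    using sqrt_2_exp_gap_mult_exp_le[of x] assms by (intro mult_left_mono) auto
  finally have "2 * sqrt (exp_gap x) * exp x \<le> sqrt 2 * (1 - exp x)" .
  moreover have "0 < sqrt (exp_gap x)" "0 < sqrt (c - exp_gap x)"
    using exp_gap_strict_antimono[of x 0] assms by auto
  ultimately have "exp x / sqrt (c - exp_gap x)
      \<le> sqrt 2 * ((1 - exp x) / (2 * sqrt (exp_gap x) * sqrt (c - exp_gap x)))"
    by (simp add: divide_simps ac_simps)
  moreover have "1 / sqrt (c - exp_gap x)
      = exp x / sqrt (c - exp_gap x) + (1 - exp x) / sqrt (c - exp_gap x)"
    by (simp add: diff_divide_distrib)
  ultimately show ?thesis
    by linarith
qed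

lemma nn_integral_exp_gap_pos_le:
  assumes "0 < b" "exp_gap b = c"
  shows "(\<integral>\<^sup>+x\<in>{0<..<b}. ennreal (1 / sqrt (c - exp_gap x)) \<partial>lborel) \<le> ennreal (pi / sqrt 2)"
proof -
  have inside: "0 < exp_gap x \<and> exp_gap x < c" if "0 < x" "x < b" for x
    using exp_gap_strict_mono[of 0 x] exp_gap_strict_mono[of x b] that assms by simp
  have range: "0 \<le> exp_gap x \<and> exp_gap x \<le> c" if "0 \<le> x" "x \<le> b" for x
    using exp_gap_nonneg[of x] exp_gap_strict_mono[of x b] that assms by (cases "x = b") auto
  have "0 < c"
    using inside[of "b / 2"] assms by simp
  define F where "F x = sqrt 2 * arcsin (sqrt (exp_gap x / c))" for x
  define F' where
    "F' x = sqrt 2 * ((exp x - 1) / (2 * sqrt (exp_gap x) * sqrt (c - exp_gap x)))" for x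
  have "(\<integral>\<^sup>+x\<in>{0<..<b}. ennreal (1 / sqrt (c - exp_gap x)) \<partial>lborel)
      \<le> (\<integral>\<^sup>+x\<in>{0<..<b}. ennreal (F' x) \<partial>lborel)"
    using inverse_sqrt_le_pos inside unfolding F'_def
    by (intro nn_integral_mono) (auto simp: indicator_def intro!: ennreal_leI)
  also have "\<dots> = ennreal (F b - F 0)"
  proof (rule nn_integral_FTC_Ioo[OF \<open>0 < b\<close>])
    fix x assume x: "0 < x" "x < b"
    show "(F has_real_derivative F' x) (at x)"
      unfolding F_def F'_def
      using inside[OF x] by (intro DERIV_cmult DERIV_arcsin_sqrt_divide DERIV_exp_gap) auto
    show "isCont F' x"
      unfolding F'_def using inside[OF x] by (intro continuous_intros) auto
    show "0 \<le> F' x"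
      unfolding F'_def using inside[OF x] x by simp
  next
    show "continuous_on {0..b} F"
      unfolding F_def using range \<open>0 < c\<close>
      by (intro continuous_intros) (auto intro: order_trans[of _ 0] simp: divide_le_eq_1)
  qed
  also have "F b - F 0 = pi / sqrt 2"
    using assms \<open>0 < c\<close> by (simp add: F_def field_simps)
  finally show ?thesis .
qed

lemma nn_integral_exp_gap_neg_le:
  assumes "a < 0" "exp_gap a = c"
  shows "(\<integral>\<^sup>+x\<in>{a<..<0}. ennreal (1 / sqrt (c - exp_gap x)) \<partial>lborel)
           \<le> ennreal (pi / sqrt 2 + 2 * sqrt c)"
proof -
  have inside: "0 < exp_gap x \<and> exp_gap x < c" if "a < x" "x < 0" for x
    using exp_gap_strict_antimono[of x 0] exp_gap_strict_antimono[of a x] that assms by simp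
  have range: "0 \<le> exp_gap x \<and> exp_gap x \<le> c" if "a \<le> x" "x \<le> 0" for x
    using exp_gap_nonneg[of x] exp_gap_strict_antimono[of a x] that assms by (cases "x = a") auto
  have "0 < c"
    using inside[of "a / 2"] assms by simp
  define F where "F x = - sqrt 2 * arcsin (sqrt (exp_gap x / c)) + 2 * sqrt (c - exp_gap x)" for x
  define F' where
    "F' x = sqrt 2 * ((1 - exp x) / (2 * sqrt (exp_gap x) * sqrt (c - exp_gap x)))
            + (1 - exp x) / sqrt (c - exp_gap x)" for x
  have "(\<integral>\<^sup>+x\<in>{a<..<0}. ennreal (1 / sqrt (c - exp_gap x)) \<partial>lborel)
      \<le> (\<integral>\<^sup>+x\<in>{a<..<0}. ennreal (F' x) \<partial>lborel)"
    using inverse_sqrt_le_neg inside unfolding F'_def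
    by (intro nn_integral_mono) (auto simp: indicator_def intro!: ennreal_leI)
  also have "\<dots> = ennreal (F 0 - F a)"
  proof (rule nn_integral_FTC_Ioo[OF \<open>a < 0\<close>])
    fix x assume x: "a < x" "x < 0"
    have "((\<lambda>t. sqrt (c - exp_gap t)) has_real_derivative
        (1 - exp x) / (2 * sqrt (c - exp_gap x))) (at x)"
      using inside[OF x]
      by (intro DERIV_cong[OF DERIV_chain2[OF DERIV_real_sqrt DERIV_diff[OF DERIV_const DERIV_exp_gap]]])
        (auto simp: field_simps)
    then have "(F has_real_derivative
        - sqrt 2 * ((exp x - 1) / (2 * sqrt (exp_gap x) * sqrt (c - exp_gap x)))
        + 2 * ((1 - exp x) / (2 * sqrt (c - exp_gap x)))) (at x)"
      unfolding F_def using inside[OF x]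
      by (intro DERIV_add DERIV_cmult DERIV_arcsin_sqrt_divide DERIV_exp_gap) auto
    then show "(F has_real_derivative F' x) (at x)"
      unfolding F'_def by (rule DERIV_cong) (simp add: divide_simps algebra_simps)
    show "isCont F' x"
      unfolding F'_def using inside[OF x] by (intro continuous_intros) auto
    show "0 \<le> F' x"
      unfolding F'_def using inside[OF x] x by simp
  next
    show "continuous_on {a..0} F"
      unfolding F_def using range \<open>0 < c\<close>
      by (intro continuous_intros) (auto intro: order_trans[of _ 0] simp: divide_le_eq_1)
  qed
  also have "F 0 - F a = pi / sqrt 2 + 2 * sqrt c"
    using assms \<open>0 < c\<close> by (simp add: F_def field_simps)
  finally show ?thesis .
qed

theorem corollary2p5:
  fixes f0 :: real
  assumes "f0 > 1"
  shows "beta f0 \<le> ennreal (pi / sqrt 2 + sqrt (f0 - 1))"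
proof -
  define c where "c = f0 - 1"
  have "0 < c"
    using assms by (simp add: c_def)
  obtain a where a: "a < 0" "exp_gap a = c"
    using exp_gap_attains_neg[OF \<open>0 < c\<close>] .
  obtain b where b: "0 < b" "exp_gap b = c"
    using exp_gap_attains_pos[OF \<open>0 < c\<close>] .
  let ?h = "\<lambda>x. ennreal (1 / sqrt (c - exp_gap x))"
  have "beta f0 = ennreal (1 / 2) * (\<integral>\<^sup>+x\<in>{a<..<b}. ?h x \<partial>lborel)"
    using phi_lo_eq[of a f0] phi_hi_eq[of b f0] a b
    by (simp add: beta_def c_def ff_eq_exp_gap diff_diff_eq)
  also have "\<dots> = ennreal (1 / 2) *
      ((\<integral>\<^sup>+x\<in>{a<..<0}. ?h x \<partial>lborel) + (\<integral>\<^sup>+x\<in>{0<..<b}. ?h x \<partial>lborel))"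
    using a b by (subst nn_integral_Ioo_split[of _ a 0 b]) auto
  also have "\<dots> \<le> ennreal (1 / 2) * (ennreal (pi / sqrt 2 + 2 * sqrt c) + ennreal (pi / sqrt 2))"
    using nn_integral_exp_gap_neg_le[OF a] nn_integral_exp_gap_pos_le[OF b]
    by (intro mult_left_mono add_mono) auto
  also have "\<dots> = ennreal (1 / 2) * ennreal (pi / sqrt 2 + 2 * sqrt c + pi / sqrt 2)"
    using \<open>0 < c\<close>
    by (subst ennreal_plus[of "pi / sqrt 2 + 2 * sqrt c"]) (auto intro!: add_nonneg_nonneg)
  also have "\<dots> = ennreal (pi / sqrt 2 + sqrt c)"
    using \<open>0 < c\<close>
    by (subst ennreal_mult[symmetric]) (auto intro!: add_nonneg_nonneg simp: add_divide_distrib)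
  finally show ?thesis
    by (simp add: c_def)
qed

end
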